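(* Let $(\mathbf{F},\Delta)$ be a poset comonoid and $(\mathbf{F},\Box)$ a poset monoid on the same poset species which form an adjoint pair with $\Delta\dashv\Box$. Then the vector space monoid $(\mathbf{k}\mathbf{F},\Box)$ is isomorphic to the dual monoid $(\mathbf{k}\mathbf{F}^*,\Delta^* )$, via the isomorphism sending each basis element $x\in\mathbf{F}[I]$ to $\omega_x^*$, where $\{\omega_x^*\}_{x\in\mathbf{F}[I]}$ is the basis of $\mathbf{k}\mathbf{F}[I]^*$ dual to the inverted basis $\{\omega_x\}_{x\in\mathbf{F}[I]}$ of $\mathbf{k}\mathbf{F}[I]$.
   Context: $\mathbf{k}$ is a field of characteristic $0$. A (connected) poset species $\mathbf{F}$ assigns to each finite set $I$ a locally finite poset $\mathbf{F}[I]$, with $\mathbf{F}[\emptyset]$ a singleton $\{1\}$, and to each bijection $f:I\to J$ an order-preserving bijection $\mathbf{F}[f]$, functorially. A poset monoid $(\mathbf{F},\Box)$: order-preserving maps $\Box_{S,T}:\mathbf{F}[S]\times\mathbf{F}[T]\to\mathbf{F}[S\sqcup T]$ for disjoint finite $S,T$, natural in bijections, associative, unital with unit $1$. A poset comonoid $(\mathbf{F},\Delta)$: order-preserving maps $\Delta_{S,T}:\mathbf{F}[S\sqcup T]\to\mathbf{F}[S]\times\mathbf{F}[T]$, natural, coassociative, counital ($\Delta_{I,\emptyset}(x)=(x,1)$, $\Delta_{\emptyset,I}(x)=(1,x)$). Adjoint pair $\Delta\dashv\Box$: $\Delta_{S,T}(x)\le(y,z)\iff x\le\Box_{S,T}(y,z)$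 for all $x,y,z$ (product order). The linearization $\mathbf{k}\mathbf{F}$ has $\mathbf{k}\mathbf{F}[I]$ the vector space with basis $\mathbf{F}[I]$, with $\Box,\Delta$ extended linearly ($\Delta_{S,T}(x)=y\otimes z$ when $\Delta_{S,T}(x)=(y,z)$); this gives a vector space monoid $(\mathbf{k}\mathbf{F},\Box)$ and a vector space comonoid $(\mathbf{k}\mathbf{F},\Delta)$. The dual monoid $(\mathbf{k}\mathbf{F}^*,\Delta^* )$ has components $\mathbf{k}\mathbf{F}[I]^*$ and multiplication $\Delta^*_{S,T}(\varphi\otimes\psi)=(\varphi\otimes\psi)\circ\Delta_{S,T}$. The inverted basis is $\omega_x=\sum_{x\le y}\mu(x,y)\,y$, $\mu$ the Möbius function of $\mathbf{F}[I]$. An isomorphism of vector space monoids is a family of linear isomorphisms, natural in bijections, commuting with the multiplications. *)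

theory Defs
  imports Main
begin

text \<open>F I is the poset F[I] (carrier), le I its order, Fmap f I the map F[f] for a
bijection f : I -> f`I, one the unique element of F[{}].\<close>

definition poset_species ::
  "('i set \<Rightarrow> 'a set) \<Rightarrow> ('i set \<Rightarrow> 'a \<Rightarrow> 'a \<Rightarrow> bool) \<Rightarrow>
   (('i \<Rightarrow> 'i) \<Rightarrow> 'i set \<Rightarrow> 'a \<Rightarrow> 'a) \<Rightarrow> 'a \<Rightarrow> bool" where
  "poset_species F le Fmap one \<longleftrightarrow>
     (\<forall>I. finite I \<longrightarrow> finite (F I)
        \<and> (\<forall>x\<in>F I. le I x x)
        \<and> (\<forall>x\<in>F I. \<forall>y\<in>F I. le I x y \<and> le I y x \<longrightarrow> x = y)
        \<and> (\<forall>x\<in>F I. \<forall>y\<in>F I. \<forall>z\<in>F I. le I x y \<and> le I y z \<longrightarrow> le I x z))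
   \<and> F {} = {one}
   \<and> (\<forall>f I J. finite I \<and> bij_betw f I J \<longrightarrow>
        bij_betw (Fmap f I) (F I) (F J)
        \<and> (\<forall>x\<in>F I. \<forall>y\<in>F I. le I x y \<longrightarrow> le J (Fmap f I x) (Fmap f I y)))
   \<and> (\<forall>I. finite I \<longrightarrow> (\<forall>x\<in>F I. Fmap id I x = x))
   \<and> (\<forall>f g I J. finite I \<and> bij_betw f I J \<and> bij_betw g J (g ` J) \<longrightarrow>
        (\<forall>x\<in>F I. Fmap (g \<circ> f) I x = Fmap g J (Fmap f I x)))"

definition poset_monoid ::
  "('i set \<Rightarrow> 'a set) \<Rightarrow> ('i set \<Rightarrow> 'a \<Rightarrow> 'a \<Rightarrow> bool) \<Rightarrow>
   (('i \<Rightarrow> 'i) \<Rightarrow> 'i set \<Rightarrow> 'a \<Rightarrow> 'a) \<Rightarrow> 'a \<Rightarrow>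
   ('i set \<Rightarrow> 'i set \<Rightarrow> 'a \<Rightarrow> 'a \<Rightarrow> 'a) \<Rightarrow> bool" where
  "poset_monoid F le Fmap one Box \<longleftrightarrow>
     (\<forall>S T. finite S \<and> finite T \<and> S \<inter> T = {} \<longrightarrow>
        (\<forall>y\<in>F S. \<forall>z\<in>F T. Box S T y z \<in> F (S \<union> T))
        \<and> (\<forall>y\<in>F S. \<forall>y'\<in>F S. \<forall>z\<in>F T. \<forall>z'\<in>F T.
              le S y y' \<and> le T z z' \<longrightarrow> le (S \<union> T) (Box S T y z) (Box S T y' z'))
        \<and> (\<forall>f J. bij_betw f (S \<union> T) J \<longrightarrow>
              (\<forall>y\<in>F S. \<forall>z\<in>F T.
                 Fmap f (S \<union> T) (Box S T y z) = Box (f ` S) (f ` T) (Fmap f S y) (Fmap f T z))))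
   \<and> (\<forall>R S T. finite R \<and> finite S \<and> finite T \<and> R \<inter> S = {} \<and> R \<inter> T = {} \<and> S \<inter> T = {} \<longrightarrow>
        (\<forall>x\<in>F R. \<forall>y\<in>F S. \<forall>z\<in>F T.
           Box (R \<union> S) T (Box R S x y) z = Box R (S \<union> T) x (Box S T y z)))
   \<and> (\<forall>I. finite I \<longrightarrow> (\<forall>x\<in>F I. Box {} I one x = x \<and> Box I {} x one = x))"

definition poset_comonoid ::
  "('i set \<Rightarrow> 'a set) \<Rightarrow> ('i set \<Rightarrow> 'a \<Rightarrow> 'a \<Rightarrow> bool) \<Rightarrow>
   (('i \<Rightarrow> 'i) \<Rightarrow> 'i set \<Rightarrow> 'a \<Rightarrow> 'a) \<Rightarrow> 'a \<Rightarrow>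
   ('i set \<Rightarrow> 'i set \<Rightarrow> 'a \<Rightarrow> 'a \<times> 'a) \<Rightarrow> bool" where
  "poset_comonoid F le Fmap one Delta \<longleftrightarrow>
     (\<forall>S T. finite S \<and> finite T \<and> S \<inter> T = {} \<longrightarrow>
        (\<forall>x\<in>F (S \<union> T). fst (Delta S T x) \<in> F S \<and> snd (Delta S T x) \<in> F T)
        \<and> (\<forall>x\<in>F (S \<union> T). \<forall>x'\<in>F (S \<union> T). le (S \<union> T) x x' \<longrightarrow>
              le S (fst (Delta S T x)) (fst (Delta S T x'))
              \<and> le T (snd (Delta S T x)) (snd (Delta S T x')))
        \<and> (\<forall>f J. bij_betw f (S \<union> T) J \<longrightarrow>
              (\<forall>x\<in>F (S \<union> T).
                 Delta (f ` S) (f ` T) (Fmap f (S \<union> T) x)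
                 = (Fmap f S (fst (Delta S T x)), Fmap f T (snd (Delta S T x))))))
   \<and> (\<forall>R S T. finite R \<and> finite S \<and> finite T \<and> R \<inter> S = {} \<and> R \<inter> T = {} \<and> S \<inter> T = {} \<longrightarrow>
        (\<forall>x\<in>F (R \<union> S \<union> T).
           Delta R S (fst (Delta (R \<union> S) T x)) = (fst (Delta R (S \<union> T) x),
                                                   fst (Delta S T (snd (Delta R (S \<union> T) x))))
           \<and> snd (Delta (R \<union> S) T x) = snd (Delta S T (snd (Delta R (S \<union> T) x)))))
   \<and> (\<forall>I. finite I \<longrightarrow> (\<forall>x\<in>F I. Delta I {} x = (x, one) \<and> Delta {} I x = (one, x)))"

definition adjoint_pair ::
  "('i set \<Rightarrow> 'a set) \<Rightarrow> ('i set \<Rightarrow> 'a \<Rightarrow> 'a \<Rightarrow> bool) \<Rightarrow>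
   ('i set \<Rightarrow> 'i set \<Rightarrow> 'a \<Rightarrow> 'a \<times> 'a) \<Rightarrow> ('i set \<Rightarrow> 'i set \<Rightarrow> 'a \<Rightarrow> 'a \<Rightarrow> 'a) \<Rightarrow> bool" where
  "adjoint_pair F le Delta Box \<longleftrightarrow>
     (\<forall>S T. finite S \<and> finite T \<and> S \<inter> T = {} \<longrightarrow>
        (\<forall>x\<in>F (S \<union> T). \<forall>y\<in>F S. \<forall>z\<in>F T.
           (le S (fst (Delta S T x)) y \<and> le T (snd (Delta S T x)) z)
           \<longleftrightarrow> le (S \<union> T) x (Box S T y z)))"

text \<open>A vector of kF[I] is a function 'a => 'k vanishing outside F I (coefficients in
the basis F I).  A functional in kF[I]^* is represented by its values on the basis F I,
again a function 'a => 'k vanishing outside F I.\<close>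

definition vec :: "('i set \<Rightarrow> 'a set) \<Rightarrow> 'i set \<Rightarrow> ('a \<Rightarrow> 'k::zero) \<Rightarrow> bool" where
  "vec F I u \<longleftrightarrow> (\<forall>a. a \<notin> F I \<longrightarrow> u a = 0)"

definition pair :: "'a set \<Rightarrow> ('a \<Rightarrow> 'k::comm_ring_1) \<Rightarrow> ('a \<Rightarrow> 'k) \<Rightarrow> 'k" where
  "pair A phi v = (\<Sum>w\<in>A. phi w * v w)"

definition mobius :: "'a set \<Rightarrow> ('a \<Rightarrow> 'a \<Rightarrow> bool) \<Rightarrow> 'a \<Rightarrow> 'a \<Rightarrow> 'k::comm_ring_1" where
  "mobius A le = (THE mu. (\<forall>x y. mu x y \<noteq> 0 \<longrightarrow> x \<in> A \<and> y \<in> A \<and> le x y)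
       \<and> (\<forall>x\<in>A. \<forall>y\<in>A. le x y \<longrightarrow>
            (\<Sum>z\<in>{z\<in>A. le x z \<and> le z y}. mu x z) = (if x = y then 1 else 0)))"

definition omega :: "'a set \<Rightarrow> ('a \<Rightarrow> 'a \<Rightarrow> bool) \<Rightarrow> 'a \<Rightarrow> ('a \<Rightarrow> 'k::comm_ring_1)" where
  "omega A le x = (\<lambda>y. if y \<in> A \<and> le x y then mobius A le x y else 0)"

definition dual_omega :: "'a set \<Rightarrow> ('a \<Rightarrow> 'a \<Rightarrow> bool) \<Rightarrow> 'a \<Rightarrow> ('a \<Rightarrow> 'k::comm_ring_1)" where
  "dual_omega A le x = (THE phi. (\<forall>a. a \<notin> A \<longrightarrow> phi a = 0)
       \<and> (\<forall>y\<in>A. pair A phi (omega A le y) = (if x = y then 1 else 0)))"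

definition Phi :: "('i set \<Rightarrow> 'a set) \<Rightarrow> ('i set \<Rightarrow> 'a \<Rightarrow> 'a \<Rightarrow> bool) \<Rightarrow> 'i set \<Rightarrow>
    ('a \<Rightarrow> 'k::comm_ring_1) \<Rightarrow> ('a \<Rightarrow> 'k)" where
  "Phi F le I u = (\<lambda>a. \<Sum>x\<in>F I. u x * dual_omega (F I) (le I) x a)"

definition box_mult :: "('i set \<Rightarrow> 'a set) \<Rightarrow> ('i set \<Rightarrow> 'i set \<Rightarrow> 'a \<Rightarrow> 'a \<Rightarrow> 'a) \<Rightarrow>
    'i set \<Rightarrow> 'i set \<Rightarrow> ('a \<Rightarrow> 'k::comm_ring_1) \<Rightarrow> ('a \<Rightarrow> 'k) \<Rightarrow> ('a \<Rightarrow> 'k)" where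
  "box_mult F Box S T u v =
     (\<lambda>x. \<Sum>p\<in>{p \<in> F S \<times> F T. Box S T (fst p) (snd p) = x}. u (fst p) * v (snd p))"

definition delta_dual_mult :: "('i set \<Rightarrow> 'a set) \<Rightarrow> ('i set \<Rightarrow> 'i set \<Rightarrow> 'a \<Rightarrow> 'a \<times> 'a) \<Rightarrow>
    'i set \<Rightarrow> 'i set \<Rightarrow> ('a \<Rightarrow> 'k::comm_ring_1) \<Rightarrow> ('a \<Rightarrow> 'k) \<Rightarrow> ('a \<Rightarrow> 'k)" where
  "delta_dual_mult F Delta S T phi psi =
     (\<lambda>x. if x \<in> F (S \<union> T) then phi (fst (Delta S T x)) * psi (snd (Delta S T x)) else 0)"

text \<open>Action of a bijection f : I -> J on kF[I] (and, identically under the basis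
identification, on kF[I]^*, where it is the transpose of kF[f^-1]).\<close>
definition transport :: "('i set \<Rightarrow> 'a set) \<Rightarrow> (('i \<Rightarrow> 'i) \<Rightarrow> 'i set \<Rightarrow> 'a \<Rightarrow> 'a) \<Rightarrow>
    ('i \<Rightarrow> 'i) \<Rightarrow> 'i set \<Rightarrow> ('a \<Rightarrow> 'k::comm_ring_1) \<Rightarrow> ('a \<Rightarrow> 'k)" where
  "transport F Fmap f I u = (\<lambda>b. \<Sum>a\<in>{a\<in>F I. Fmap f I a = b}. u a)"

end

theory Submission
  imports Defs
begin

(* Since the sum of mu(y, w) over y <= w <= x is 1 if x = y and 0 otherwise, the functional
   dual to the inverted basis is omega_x^* = sum of w^* over w <= x.  In coordinates, the map
   x |-> omega_x^* is therefore the zeta transform u |-> (a |-> sum of u_x over x >= a).  It is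
   unitriangular, hence bijective, and it commutes with relabelling because F[f] is an order
   isomorphism.  For multiplicativity, the adjunction says that Box y z >= x holds exactly when
   y >= Delta_S(x) and z >= Delta_T(x), so the upper sum of a product at x factors into the
   upper sums at the two components of Delta(x). *)

locale finite_poset =
  fixes A :: "'a set" and le :: "'a \<Rightarrow> 'a \<Rightarrow> bool"
  assumes finite: "finite A"
    and refl: "x \<in> A \<Longrightarrow> le x x"
    and antisym: "x \<in> A \<Longrightarrow> y \<in> A \<Longrightarrow> le x y \<Longrightarrow> le y x \<Longrightarrow> x = y"
    and trans: "x \<in> A \<Longrightarrow> y \<in> A \<Longrightarrow> z \<in> A \<Longrightarrow> le x y \<Longrightarrow> le y z \<Longrightarrow> le x z"

definition strict_less :: "'a set \<Rightarrow> ('a \<Rightarrow> 'a \<Rightarrow> bool) \<Rightarrow> ('a \<times> 'a) set" where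
  "strict_less A le = {(x, y). x \<in> A \<and> y \<in> A \<and> le x y \<and> x \<noteq> y}"

context finite_poset
begin

lemma dual: "finite_poset A (\<lambda>x y. le y x)"
  by unfold_locales (auto intro: finite antisym trans refl)

lemma subset: "B \<subseteq> A \<Longrightarrow> finite_poset B le"
  by unfold_locales (auto intro: finite_subset[OF _ finite] antisym trans refl)

lemma wf_strict_less: "wf (strict_less A le)"
proof (rule finite_acyclic_wf)
  have "strict_less A le \<subseteq> A \<times> A"
    unfolding strict_less_def by auto
  then show "finite (strict_less A le)"
    using finite by (meson finite_SigmaI finite_subset)
  have "trans (strict_less A le)"
    unfolding strict_less_def trans_def
    using trans antisym by blast
  moreover have "irrefl (strict_less A le)"
    unfolding strict_less_def irrefl_def by auto
  ultimately show "acyclic (strict_less A le)"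
    by (simp add: acyclic_irrefl)
qed

lemma upper_set_split:
  "a \<in> A \<Longrightarrow> {x \<in> A. le a x} = insert a {x \<in> A. le a x \<and> x \<noteq> a}"
  using refl by auto

lemma unitriangular_eq_0:
  fixes c :: "'a \<Rightarrow> 'a \<Rightarrow> 'k::comm_ring_1"
  assumes diag: "\<And>y. y \<in> A \<Longrightarrow> c y y = 1"
    and sums: "\<And>y. y \<in> A \<Longrightarrow> (\<Sum>w\<in>{w\<in>A. le y w}. c y w * phi w) = 0"
    and "x \<in> A"
  shows "phi x = 0"
  using \<open>x \<in> A\<close>
proof (induction x rule: wf_induct_rule[OF finite_poset.wf_strict_less[OF dual]])
  case (1 y)
  have "(\<Sum>w\<in>{w\<in>A. le y w \<and> w \<noteq> y}. c y w * phi w) = 0"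
    using 1 by (intro sum.neutral) (auto simp: strict_less_def)
  moreover have "(\<Sum>w\<in>{w\<in>A. le y w}. c y w * phi w)
      = c y y * phi y + (\<Sum>w\<in>{w\<in>A. le y w \<and> w \<noteq> y}. c y w * phi w)"
    unfolding upper_set_split[OF \<open>y \<in> A\<close>] using finite by simp
  ultimately show "phi y = 0"
    using sums[OF \<open>y \<in> A\<close>] diag[OF \<open>y \<in> A\<close>] by simp
qed

lemma exists_upper_sums_eq:
  fixes v :: "'a \<Rightarrow> 'k::comm_ring_1"
  shows "\<exists>u. \<forall>a\<in>A. (\<Sum>x\<in>{x\<in>A. le a x}. u x) = v a"
proof -
  \<comment> \<open>recursion downwards from the maximal elements\<close>
  let ?R = "strict_less A (\<lambda>x y. le y x)"
  define u where "u = wfrec ?R (\<lambda>u a. v a - (\<Sum>x\<in>{x\<in>A. le a x \<and> x \<noteq> a}. u x))"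
  have "u a = v a - (\<Sum>x\<in>{x\<in>A. le a x \<and> x \<noteq> a}. u x)" if "a \<in> A" for a
  proof -
    have "u a = v a - (\<Sum>x\<in>{x\<in>A. le a x \<and> x \<noteq> a}. cut u ?R a x)"
      by (rule def_wfrec[OF u_def[THEN eq_reflection] finite_poset.wf_strict_less[OF dual]])
    also have "\<dots> = v a - (\<Sum>x\<in>{x\<in>A. le a x \<and> x \<noteq> a}. u x)"
      using that by (auto intro!: sum.cong cut_apply simp: strict_less_def)
    finally show ?thesis .
  qed
  then have "(\<Sum>x\<in>{x\<in>A. le a x}. u x) = v a" if "a \<in> A" for a
    unfolding upper_set_split[OF that] using that finite by simp
  then show ?thesis by blast
qed

end

definition is_mobius :: "'a set \<Rightarrow> ('a \<Rightarrow> 'a \<Rightarrow> bool) \<Rightarrow> ('a \<Rightarrow> 'a \<Rightarrow> 'k::comm_ring_1) \<Rightarrow> bool" where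
  "is_mobius A le mu \<longleftrightarrow> (\<forall>x y. mu x y \<noteq> 0 \<longrightarrow> x \<in> A \<and> y \<in> A \<and> le x y)
     \<and> (\<forall>x\<in>A. \<forall>y\<in>A. le x y \<longrightarrow>
          (\<Sum>z\<in>{z\<in>A. le x z \<and> le z y}. mu x z) = (if x = y then 1 else 0))"

context finite_poset
begin

lemma interval_as_lower_set: "{z\<in>A. le x z \<and> le z y} = {z\<in>{z\<in>A. le x z}. le z y}"
  by auto

lemma upper_set_dual_poset: "finite_poset {z\<in>A. le x z} (\<lambda>a b. le b a)"
  by (rule finite_poset.dual[OF subset]) auto

lemma mobius_exists: "\<exists>mu :: 'a \<Rightarrow> 'a \<Rightarrow> 'k::comm_ring_1. is_mobius A le mu"
proof -
  \<comment> \<open>mu(x, -) solves an upper-sum system for the dual order on the upper set of x\<close>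
  have "\<forall>x. \<exists>m :: 'a \<Rightarrow> 'k. \<forall>y\<in>{z\<in>A. le x z}.
      (\<Sum>z\<in>{z\<in>{z\<in>A. le x z}. le z y}. m z) = (if x = y then 1 else 0)"
    by (intro allI finite_poset.exists_upper_sums_eq[OF upper_set_dual_poset])
  then obtain m :: "'a \<Rightarrow> 'a \<Rightarrow> 'k" where m: "\<forall>x. \<forall>y\<in>{z\<in>A. le x z}.
      (\<Sum>z\<in>{z\<in>{z\<in>A. le x z}. le z y}. m x z) = (if x = y then 1 else 0)"
    by (rule choice[THEN exE])
  define mu where "mu x y = (if x \<in> A \<and> y \<in> A \<and> le x y then m x y else 0)" for x y
  have "(\<Sum>z\<in>{z\<in>A. le x z \<and> le z y}. mu x z) = (if x = y then 1 else 0)"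
    if "x \<in> A" "y \<in> A" "le x y" for x y
  proof -
    have "(\<Sum>z\<in>{z\<in>A. le x z \<and> le z y}. mu x z) = (\<Sum>z\<in>{z\<in>{z\<in>A. le x z}. le z y}. m x z)"
      unfolding interval_as_lower_set using that by (intro sum.cong) (auto simp: mu_def)
    also have "\<dots> = (if x = y then 1 else 0)"
      using m that by blast
    finally show ?thesis .
  qed
  then have "is_mobius A le mu"
    unfolding is_mobius_def by (auto simp: mu_def)
  then show ?thesis by blast
qed

lemma is_mobius_sum:
  "is_mobius A le mu \<Longrightarrow> x \<in> A \<Longrightarrow> y \<in> A \<Longrightarrow> le x y \<Longrightarrow>
    (\<Sum>z\<in>{z\<in>A. le x z \<and> le z y}. mu x z) = (if x = y then 1 else 0)"
  unfolding is_mobius_def by blast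

lemma is_mobius_eq_0: "is_mobius A le mu \<Longrightarrow> \<not> (x \<in> A \<and> y \<in> A \<and> le x y) \<Longrightarrow> mu x y = 0"
  unfolding is_mobius_def by blast

lemma mobius_unique:
  assumes mu: "is_mobius A le mu" and mu': "is_mobius A le mu'"
  shows "mu = mu'"
proof (intro ext)
  fix x y
  show "mu x y = mu' x y"
  proof (cases "x \<in> A \<and> y \<in> A \<and> le x y")
    case True
    have sums: "(\<Sum>w\<in>{w\<in>{z\<in>A. le x z}. le w z}. 1 * (mu x w - mu' x w)) = 0"
      if "z \<in> {z\<in>A. le x z}" for z
    proof -
      have "(\<Sum>w\<in>{w\<in>{z\<in>A. le x z}. le w z}. 1 * (mu x w - mu' x w))
          = (\<Sum>w\<in>{w\<in>A. le x w \<and> le w z}. mu x w) - (\<Sum>w\<in>{w\<in>A. le x w \<and> le w z}. mu' x w)"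
        unfolding interval_as_lower_set by (simp add: sum_subtractf)
      also have "\<dots> = 0"
        using that True is_mobius_sum[OF mu] is_mobius_sum[OF mu'] by simp
      finally show ?thesis .
    qed
    have "mu x y - mu' x y = 0"
      by (rule finite_poset.unitriangular_eq_0[OF upper_set_dual_poset _ sums]) (use True in auto)
    then show ?thesis by simp
  qed (simp add: is_mobius_eq_0[OF mu] is_mobius_eq_0[OF mu'])
qed

lemma is_mobius_mobius: "is_mobius A le (mobius A le)"
proof -
  have "\<exists>!mu :: 'a \<Rightarrow> 'a \<Rightarrow> 'k::comm_ring_1. is_mobius A le mu"
    using mobius_exists mobius_unique by blast
  then show ?thesis
    unfolding mobius_def is_mobius_def[symmetric] by (rule theI')
qed

lemma sum_mobius_interval:
  "x \<in> A \<Longrightarrow> y \<in> A \<Longrightarrow> le x y \<Longrightarrow>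
    (\<Sum>z\<in>{z\<in>A. le x z \<and> le z y}. mobius A le x z) = (if x = y then 1 else 0)"
  by (rule is_mobius_sum[OF is_mobius_mobius])

lemma mobius_diag: "x \<in> A \<Longrightarrow> mobius A le x x = 1"
proof -
  assume "x \<in> A"
  then have "{z\<in>A. le x z \<and> le z x} = {x}"
    using refl antisym by blast
  then show ?thesis
    using sum_mobius_interval[OF \<open>x \<in> A\<close> \<open>x \<in> A\<close> refl[OF \<open>x \<in> A\<close>]] by simp
qed

lemma pair_omega:
  "pair A phi (omega A le y) = (\<Sum>w\<in>{w\<in>A. le y w}. mobius A le y w * phi w)"
  unfolding pair_def omega_def using finite
  by (simp add: sum.inter_filter[symmetric] if_distrib mult.commute cong: if_cong)

lemma dual_omega_eq:
  assumes "x \<in> A"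
  shows "(dual_omega A le x :: 'a \<Rightarrow> 'k::comm_ring_1) = (\<lambda>w. if w \<in> A \<and> le w x then 1 else 0)"
  unfolding dual_omega_def
proof (rule the_equality)
  let ?down = "(\<lambda>w. if w \<in> A \<and> le w x then 1 else 0) :: 'a \<Rightarrow> 'k"
  have pair_down: "pair A ?down (omega A le y) = (if x = y then 1 else 0)" if "y \<in> A" for y
  proof -
    have "pair A ?down (omega A le y) = (\<Sum>w\<in>{w\<in>A. le y w}. if le w x then mobius A le y w else 0)"
      unfolding pair_omega by (intro sum.cong) auto
    also have "\<dots> = (\<Sum>w\<in>{w\<in>A. le y w \<and> le w x}. mobius A le y w)"
      using finite by (simp add: sum.inter_filter if_if_eq_conj)
    also have "\<dots> = (if x = y then 1 else 0)"
    proof (cases "le y x")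
      case False
      then have empty: "{w\<in>A. le y w \<and> le w x} = {}" and "x \<noteq> y"
        using trans[OF \<open>y \<in> A\<close> _ \<open>x \<in> A\<close>] refl[OF \<open>y \<in> A\<close>] by auto
      then show ?thesis unfolding empty by simp
    qed (simp add: sum_mobius_interval \<open>x \<in> A\<close> \<open>y \<in> A\<close>)
    finally show ?thesis .
  qed
  then show "(\<forall>a. a \<notin> A \<longrightarrow> ?down a = 0) \<and> (\<forall>y\<in>A. pair A ?down (omega A le y) = (if x = y then 1 else 0))"
    by simp
  fix phi :: "'a \<Rightarrow> 'k"
  assume phi: "(\<forall>a. a \<notin> A \<longrightarrow> phi a = 0) \<and> (\<forall>y\<in>A. pair A phi (omega A le y) = (if x = y then 1 else 0))"
  have sums: "(\<Sum>w\<in>{w\<in>A. le y w}. mobius A le y w * (phi w - ?down w)) = 0" if "y \<in> A" for y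
    using phi pair_down[OF that] that unfolding pair_omega by (simp add: right_diff_distrib sum_subtractf)
  have diff: "phi a - ?down a = 0" if "a \<in> A" for a
    using mobius_diag sums that by (rule unitriangular_eq_0[where phi = "\<lambda>w. phi w - ?down w"])
  show "phi = ?down"
  proof
    fix a
    show "phi a = ?down a"
      using phi diff[of a] by (cases "a \<in> A") auto
  qed
qed

end

definition upper_sum :: "'a set \<Rightarrow> ('a \<Rightarrow> 'a \<Rightarrow> bool) \<Rightarrow> ('a \<Rightarrow> 'k::comm_ring_1) \<Rightarrow> 'a \<Rightarrow> 'k" where
  "upper_sum A le u a = (if a \<in> A then \<Sum>x\<in>{x\<in>A. le a x}. u x else 0)"

lemma Phi_eq_upper_sum:
  assumes "finite_poset (F I) (le I)"
  shows "(Phi F le I :: ('a \<Rightarrow> 'k::comm_ring_1) \<Rightarrow> _) = upper_sum (F I) (le I)"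
proof (intro ext)
  fix u :: "'a \<Rightarrow> 'k" and a
  have "Phi F le I u a = (\<Sum>x\<in>F I. if a \<in> F I \<and> le I a x then u x else 0)"
    unfolding Phi_def by (intro sum.cong) (auto simp: finite_poset.dual_omega_eq[OF assms])
  also have "\<dots> = upper_sum (F I) (le I) u a"
    unfolding upper_sum_def using finite_poset.finite[OF assms] by (simp add: sum.inter_filter)
  finally show "Phi F le I u a = upper_sum (F I) (le I) u a" .
qed

lemma upper_sum_add: "upper_sum A le (\<lambda>a. u a + v a) = (\<lambda>a. upper_sum A le u a + upper_sum A le v a)"
  unfolding upper_sum_def by (auto simp: sum.distrib)

lemma upper_sum_mult: "upper_sum A le (\<lambda>a. c * u a) = (\<lambda>a. c * upper_sum A le u a)"
  unfolding upper_sum_def by (auto simp: sum_distrib_left)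

lemma upper_sum_cong: "(\<And>x. x \<in> A \<Longrightarrow> u x = v x) \<Longrightarrow> upper_sum A le u = upper_sum A le v"
  unfolding upper_sum_def by (auto intro!: sum.cong)

lemma (in finite_poset) bij_betw_upper_sum:
  "bij_betw (upper_sum A le) {u :: 'a \<Rightarrow> 'k::comm_ring_1. \<forall>a. a \<notin> A \<longrightarrow> u a = 0}
     {u. \<forall>a. a \<notin> A \<longrightarrow> u a = 0}"
  unfolding bij_betw_def
proof (intro conjI inj_onI subset_antisym subsetI)
  fix u v :: "'a \<Rightarrow> 'k"
  assume u: "u \<in> {u. \<forall>a. a \<notin> A \<longrightarrow> u a = 0}" and v: "v \<in> {u. \<forall>a. a \<notin> A \<longrightarrow> u a = 0}"
    and eq: "upper_sum A le u = upper_sum A le v"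
  have sums: "(\<Sum>x\<in>{x\<in>A. le a x}. 1 * (u x - v x)) = 0" if "a \<in> A" for a
    using fun_cong[OF eq, of a] that by (simp add: upper_sum_def sum_subtractf)
  have diff: "u a - v a = 0" if "a \<in> A" for a
    by (rule unitriangular_eq_0[OF _ sums that]) simp
  show "u = v"
  proof
    fix a
    show "u a = v a"
      using u v diff[of a] by (cases "a \<in> A") auto
  qed
next
  fix v :: "'a \<Rightarrow> 'k"
  assume v: "v \<in> {u. \<forall>a. a \<notin> A \<longrightarrow> u a = 0}"
  obtain u where u: "\<forall>a\<in>A. (\<Sum>x\<in>{x\<in>A. le a x}. u x) = v a"
    using exists_upper_sums_eq by blast
  let ?u = "\<lambda>x. if x \<in> A then u x else 0"
  have "upper_sum A le ?u = upper_sum A le u"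
    by (rule upper_sum_cong) simp
  also have "\<dots> = v"
  proof
    fix a
    show "upper_sum A le u a = v a"
      using u v by (cases "a \<in> A") (auto simp: upper_sum_def)
  qed
  finally have "v = upper_sum A le ?u" ..
  then show "v \<in> upper_sum A le ` {u. \<forall>a. a \<notin> A \<longrightarrow> u a = 0}"
    by force
qed (auto simp: upper_sum_def)

lemma monotone_bij_reflects_order:
  assumes "finite A" and "finite B" and h: "bij_betw h A B" and k: "inj_on k B" "k ` B \<subseteq> A"
    and h_mono: "\<And>x y. x \<in> A \<Longrightarrow> y \<in> A \<Longrightarrow> l1 x y \<Longrightarrow> l2 (h x) (h y)"
    and k_mono: "\<And>x y. x \<in> B \<Longrightarrow> y \<in> B \<Longrightarrow> l2 x y \<Longrightarrow> l1 (k x) (k y)"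
    and "x \<in> A" and "y \<in> A" and "l2 (h x) (h y)"
  shows "l1 x y"
proof -
  define P1 where "P1 = {p \<in> A \<times> A. l1 (fst p) (snd p)}"
  define P2 where "P2 = {p \<in> B \<times> B. l2 (fst p) (snd p)}"
  have "finite P1" "finite P2"
    unfolding P1_def P2_def using \<open>finite A\<close> \<open>finite B\<close> by auto
  have inj_h: "inj_on (map_prod h h) P1" and h_P1: "map_prod h h ` P1 \<subseteq> P2"
    using h h_mono unfolding P1_def P2_def bij_betw_def inj_on_def by auto
  have "inj_on (map_prod k k) P2" and "map_prod k k ` P2 \<subseteq> P1"
    using k k_mono unfolding P1_def P2_def inj_on_def by auto
  \<comment> \<open>both maps inject comparable pairs into comparable pairs, so by counting h is onto them\<close>
  then have "card P2 \<le> card P1"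
    using \<open>finite P1\<close> by (rule card_inj_on_le)
  moreover have "card P1 \<le> card P2"
    using inj_h h_P1 \<open>finite P2\<close> by (rule card_inj_on_le)
  ultimately have "map_prod h h ` P1 = P2"
    using card_subset_eq[OF \<open>finite P2\<close> h_P1] card_image[OF inj_h] by simp
  moreover have "(h x, h y) \<in> P2"
    using h \<open>x \<in> A\<close> \<open>y \<in> A\<close> \<open>l2 (h x) (h y)\<close> unfolding P2_def bij_betw_def by auto
  ultimately obtain x' y' where "(x', y') \<in> P1" "h x' = h x" "h y' = h y"
    by force
  moreover have "x' = x" "y' = y"
    using calculation h \<open>x \<in> A\<close> \<open>y \<in> A\<close> unfolding P1_def bij_betw_def inj_on_def by auto
  ultimately show ?thesis
    unfolding P1_def by auto
qed

lemma upper_sum_pushforward: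
  assumes h: "bij_betw h A B"
    and iso: "\<And>x y. x \<in> A \<Longrightarrow> y \<in> A \<Longrightarrow> l2 (h x) (h y) \<longleftrightarrow> l1 x y"
  shows "upper_sum B l2 (\<lambda>b. \<Sum>a\<in>{a\<in>A. h a = b}. u a)
    = (\<lambda>b. \<Sum>a\<in>{a\<in>A. h a = b}. upper_sum A l1 u a)"
proof
  fix b
  have fibre: "{a'\<in>A. h a' = h a} = {a}" if "a \<in> A" for a
    using h that unfolding bij_betw_def inj_on_def by auto
  show "upper_sum B l2 (\<lambda>b. \<Sum>a\<in>{a\<in>A. h a = b}. u a) b = (\<Sum>a\<in>{a\<in>A. h a = b}. upper_sum A l1 u a)"
  proof (cases "b \<in> B")
    case True
    then obtain a where a: "a \<in> A" "b = h a"
      using h unfolding bij_betw_def by auto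
    have up: "{x\<in>B. l2 (h a) x} = h ` {y\<in>A. l1 a y}"
      using h iso a unfolding bij_betw_def by auto
    have "upper_sum B l2 (\<lambda>b. \<Sum>a\<in>{a\<in>A. h a = b}. u a) b
        = (\<Sum>x\<in>h ` {y\<in>A. l1 a y}. \<Sum>a'\<in>{a'\<in>A. h a' = x}. u a')"
      unfolding upper_sum_def a(2) up[symmetric] using True a by simp
    also have "\<dots> = (\<Sum>y\<in>{y\<in>A. l1 a y}. u y)"
      using h fibre by (subst sum.reindex) (auto simp: bij_betw_def intro: inj_on_subset)
    also have "\<dots> = (\<Sum>a'\<in>{a'\<in>A. h a' = b}. upper_sum A l1 u a')"
      unfolding a(2) fibre[OF a(1)] upper_sum_def using a by simp
    finally show ?thesis .
  next
    case False
    then have empty: "{a\<in>A. h a = b} = {}"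
      using h unfolding bij_betw_def by auto
    show ?thesis
      using False unfolding empty upper_sum_def by simp
  qed
qed

lemma upper_sum_box_mult:
  assumes "finite (F S)" and "finite (F T)" and "finite (F (S \<union> T))"
    and Box_mem: "\<And>y z. y \<in> F S \<Longrightarrow> z \<in> F T \<Longrightarrow> Box S T y z \<in> F (S \<union> T)"
    and Delta_mem: "\<And>x. x \<in> F (S \<union> T) \<Longrightarrow> fst (Delta S T x) \<in> F S \<and> snd (Delta S T x) \<in> F T"
    and adjoint: "\<And>x y z. x \<in> F (S \<union> T) \<Longrightarrow> y \<in> F S \<Longrightarrow> z \<in> F T \<Longrightarrow>
      le (S \<union> T) x (Box S T y z) \<longleftrightarrow> le S (fst (Delta S T x)) y \<and> le T (snd (Delta S T x)) z"
  shows "upper_sum (F (S \<union> T)) (le (S \<union> T)) (box_mult F Box S T u v)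
    = delta_dual_mult F Delta S T (upper_sum (F S) (le S) u) (upper_sum (F T) (le T) (v :: 'a \<Rightarrow> 'k::comm_ring_1))"
proof
  fix x
  show "upper_sum (F (S \<union> T)) (le (S \<union> T)) (box_mult F Box S T u v) x
    = delta_dual_mult F Delta S T (upper_sum (F S) (le S) u) (upper_sum (F T) (le T) v) x"
  proof (cases "x \<in> F (S \<union> T)")
    case True
    let ?above = "{p \<in> F S \<times> F T. le (S \<union> T) x (Box S T (fst p) (snd p))}"
    have above: "?above = {y\<in>F S. le S (fst (Delta S T x)) y} \<times> {z\<in>F T. le T (snd (Delta S T x)) z}"
      using adjoint[OF True] by auto
    have "upper_sum (F (S \<union> T)) (le (S \<union> T)) (box_mult F Box S T u v) x
        = (\<Sum>w\<in>{w\<in>F (S \<union> T). le (S \<union> T) x w}.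
             \<Sum>p\<in>{p\<in>?above. Box S T (fst p) (snd p) = w}. u (fst p) * v (snd p))"
      unfolding upper_sum_def box_mult_def using True by (auto intro!: sum.cong)
    also have "\<dots> = (\<Sum>p\<in>?above. u (fst p) * v (snd p))"
      using assms(1-3) Box_mem by (intro sum.group) auto
    also have "\<dots> = (\<Sum>y\<in>{y\<in>F S. le S (fst (Delta S T x)) y}. u y)
        * (\<Sum>z\<in>{z\<in>F T. le T (snd (Delta S T x)) z}. v z)"
      unfolding above by (simp add: sum.cartesian_product split_def sum_product)
    also have "\<dots> = delta_dual_mult F Delta S T (upper_sum (F S) (le S) u) (upper_sum (F T) (le T) v) x"
      unfolding delta_dual_mult_def upper_sum_def using True Delta_mem[OF True] by simp
    finally show ?thesis .
  qed (simp add: upper_sum_def delta_dual_mult_def)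
qed

lemma poset_species_finite_poset:
  assumes "poset_species F le Fmap one" and "finite I"
  shows "finite_poset (F I) (le I)"
  using assms(1)[unfolded poset_species_def, THEN conjunct1, rule_format, OF assms(2)]
  by unfold_locales blast+

lemma poset_species_Fmap_mono:
  assumes "poset_species F le Fmap one" and "finite I" and "bij_betw f I J"
  shows "bij_betw (Fmap f I) (F I) (F J)"
    and "x \<in> F I \<Longrightarrow> y \<in> F I \<Longrightarrow> le I x y \<Longrightarrow> le J (Fmap f I x) (Fmap f I y)"
  using assms(1)[unfolded poset_species_def, THEN conjunct2, THEN conjunct2, THEN conjunct1, rule_format,
      OF conjI[OF assms(2,3)]]
  by blast+

lemma poset_species_Fmap_order_iso:
  assumes species: "poset_species F le Fmap one" and "finite I" and f: "bij_betw f I J"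
    and "x \<in> F I" and "y \<in> F I"
  shows "le J (Fmap f I x) (Fmap f I y) \<longleftrightarrow> le I x y"
proof
  have "finite J"
    using bij_betw_finite f \<open>finite I\<close> by blast
  note g = bij_betw_inv_into[OF f]
  \<comment> \<open>F[f^-1] need not invert F[f], since Fmap may depend on the values of f outside I;
    it is only used as a monotone injection back\<close>
  show "le I x y" if "le J (Fmap f I x) (Fmap f I y)"
  proof (rule monotone_bij_reflects_order[of "F I" "F J" "Fmap f I" "Fmap (inv_into I f) J" "le I" "le J"])
    show "finite (F I)" "finite (F J)"
      using finite_poset.finite[OF poset_species_finite_poset[OF species]] \<open>finite I\<close> \<open>finite J\<close>
      by blast+
    show "inj_on (Fmap (inv_into I f) J) (F J)" "Fmap (inv_into I f) J ` F J \<subseteq> F I"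
      using poset_species_Fmap_mono(1)[OF species \<open>finite J\<close> g] unfolding bij_betw_def by auto
  qed (fact poset_species_Fmap_mono[OF species \<open>finite I\<close> f] poset_species_Fmap_mono(2)[OF species \<open>finite J\<close> g]
      assms(4,5) that)+
qed (rule poset_species_Fmap_mono(2)[OF species \<open>finite I\<close> f assms(4,5)])

lemma poset_monoid_Box_mem:
  assumes "poset_monoid F le Fmap one Box" and "finite S" and "finite T" and "S \<inter> T = {}"
    and "y \<in> F S" and "z \<in> F T"
  shows "Box S T y z \<in> F (S \<union> T)"
  using assms(1)[unfolded poset_monoid_def, THEN conjunct1, rule_format, OF conjI[OF assms(2) conjI[OF assms(3,4)]]]
    assms(5,6) by blast

lemma poset_comonoid_Delta_mem:
  assumes "poset_comonoid F le Fmap one Delta" and "finite S" and "finite T" and "S \<inter> T = {}"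
    and "x \<in> F (S \<union> T)"
  shows "fst (Delta S T x) \<in> F S \<and> snd (Delta S T x) \<in> F T"
  using assms(1)[unfolded poset_comonoid_def, THEN conjunct1, rule_format, OF conjI[OF assms(2) conjI[OF assms(3,4)]]]
    assms(5) by blast

lemma adjoint_pairD:
  assumes "adjoint_pair F le Delta Box" and "finite S" and "finite T" and "S \<inter> T = {}"
    and "x \<in> F (S \<union> T)" and "y \<in> F S" and "z \<in> F T"
  shows "le (S \<union> T) x (Box S T y z) \<longleftrightarrow> le S (fst (Delta S T x)) y \<and> le T (snd (Delta S T x)) z"
  using assms(1)[unfolded adjoint_pair_def, rule_format, OF conjI[OF assms(2) conjI[OF assms(3,4)]] assms(5-7)]
  by (rule sym)

theorem mainTheorem3:
  fixes F :: "'i set \<Rightarrow> 'a set"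
    and le :: "'i set \<Rightarrow> 'a \<Rightarrow> 'a \<Rightarrow> bool"
    and Fmap :: "('i \<Rightarrow> 'i) \<Rightarrow> 'i set \<Rightarrow> 'a \<Rightarrow> 'a"
    and one :: 'a
    and Box :: "'i set \<Rightarrow> 'i set \<Rightarrow> 'a \<Rightarrow> 'a \<Rightarrow> 'a"
    and Delta :: "'i set \<Rightarrow> 'i set \<Rightarrow> 'a \<Rightarrow> 'a \<times> 'a"
  assumes "poset_species F le Fmap one"
    and "poset_monoid F le Fmap one Box"
    and "poset_comonoid F le Fmap one Delta"
    and "adjoint_pair F le Delta Box"
  shows "(\<forall>I. finite I \<longrightarrow>
            (\<forall>(u :: 'a \<Rightarrow> 'k::field_char_0) v. vec F I u \<and> vec F I v \<longrightarrow>
               Phi F le I (\<lambda>a. u a + v a) = (\<lambda>a. Phi F le I u a + Phi F le I v a))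
          \<and> (\<forall>(c :: 'k) u. vec F I u \<longrightarrow>
               Phi F le I (\<lambda>a. c * u a) = (\<lambda>a. c * Phi F le I u a))
          \<and> bij_betw (Phi F le I :: ('a \<Rightarrow> 'k) \<Rightarrow> ('a \<Rightarrow> 'k))
               {u. vec F I u} {u. vec F I u})
       \<and> (\<forall>f I J (u :: 'a \<Rightarrow> 'k). finite I \<and> bij_betw f I J \<and> vec F I u \<longrightarrow>
            Phi F le J (transport F Fmap f I u) = transport F Fmap f I (Phi F le I u))
       \<and> (\<forall>S T (u :: 'a \<Rightarrow> 'k) v. finite S \<and> finite T \<and> S \<inter> T = {}
            \<and> vec F S u \<and> vec F T v \<longrightarrow>
            Phi F le (S \<union> T) (box_mult F Box S T u v)
              = delta_dual_mult F Delta S T (Phi F le S u) (Phi F le T v))"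
proof -
  note poset = poset_species_finite_poset[OF assms(1)]
  have Phi: "(Phi F le I :: ('a \<Rightarrow> 'k) \<Rightarrow> _) = upper_sum (F I) (le I)" if "finite I" for I
    by (rule Phi_eq_upper_sum) (rule poset[OF that])
  note finite = finite_poset.finite[OF poset]
  show ?thesis
  proof (intro conjI allI impI; (elim conjE)?)
    show "Phi F le I (\<lambda>a. u a + v a) = (\<lambda>a. Phi F le I u a + Phi F le I v a)"
      if "finite I" for I and u v :: "'a \<Rightarrow> 'k"
      by (simp add: Phi[OF that] upper_sum_add)
    show "Phi F le I (\<lambda>a. c * u a) = (\<lambda>a. c * Phi F le I u a)"
      if "finite I" for I and c :: 'k and u
      by (simp add: Phi[OF that] upper_sum_mult)
    show "bij_betw (Phi F le I :: ('a \<Rightarrow> 'k) \<Rightarrow> _) {u. vec F I u} {u. vec F I u}"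
      if "finite I" for I
      unfolding Phi[OF that] vec_def by (rule finite_poset.bij_betw_upper_sum[OF poset[OF that]])
    show "Phi F le J (transport F Fmap f I u) = transport F Fmap f I (Phi F le I u)"
      if "finite I" and f: "bij_betw f I J" for f I J and u :: "'a \<Rightarrow> 'k"
      unfolding transport_def Phi[OF that(1)] Phi[OF bij_betw_finite[OF f, THEN iffD1, OF that(1)]]
      by (rule upper_sum_pushforward[OF poset_species_Fmap_mono(1)[OF assms(1) that]])
        (rule poset_species_Fmap_order_iso[OF assms(1) that])
    show "Phi F le (S \<union> T) (box_mult F Box S T u v)
        = delta_dual_mult F Delta S T (Phi F le S u) (Phi F le T v)"
      if "finite S" "finite T" "S \<inter> T = {}" for S T and u v :: "'a \<Rightarrow> 'k"
      unfolding Phi[OF \<open>finite S\<close>] Phi[OF \<open>finite T\<close>] Phi[OF finite_UnI[OF that(1,2)]]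
      by (rule upper_sum_box_mult[where F = F and le = le and S = S and T = T and Box = Box and Delta = Delta, OF finite[OF that(1)] finite[OF that(2)] finite[OF finite_UnI[OF that(1,2)]]
            poset_monoid_Box_mem[OF assms(2) that] poset_comonoid_Delta_mem[OF assms(3) that]
            adjoint_pairD[OF assms(4) that]])
  qed
qed

end
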